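(* Let $G=(V,E)$ with weight $\mu$ be an infinite, connected, locally finite weighted graph satisfying condition $(p_0)$, let $m>1$, and fix $o\in V$. Assume either $(p,q)\in G_{5.1}=\{(p,q): p+q=m-1,\ p\ge 0,\ q>0\}$, or $(p,q)\in G_{5.2}=\{(p,q): p+q=m-1,\ q<0\}$ with $1<m<3$. Then there exists $k_0>0$ (depending only on $p_0$, $m$, $p$, $q$) such that if for some $\kappa\in(0,k_0)$ there are constants $C>0$ and $n_1$ with $$W_o(n)\le C\, e^{\kappa n}\quad\text{for all } n\ge n_1,$$ then the inequality $\Delta_m u+u^p|\nabla u|^q\le 0$ on $V$ admits no nontrivial positive solution.
   Context: Setting: $G=(V,E)$ is an infinite, connected, locally finite graph with no loops and no multiple edges; $x\sim y$ means $x$ and $y$ are joined by an edge. A weight is a symmetric function $\mu:V\times V\to[0,\infty)$ with $\mu_{xy}=\mu_{yx}>0$ if and only if $x\sim y$; the vertex measure is $\mu(x)=\sum_{y\sim x}\mu_{xy}$. For $m>1$ and $u:V\to\mathbb R$, $\Delta_m u(x)=\frac{1}{\mu(x)}\sum_{y\sim x}\mu_{xy}|u(y)-u(x)|^{m-2}(u(y)-u(x))$ and $|\nabla u(x)|=\big(\sum_{y\sim x}\frac{\mu_{xy}}{2\mu(x)}(u(y)-u(x))^2\big)^{1/2}$. Condition $(p_0)$: there is a constant $p_0>1$ such that $\mu_{xy}/\mu(x)\ge 1/p_0$ for all $x\sim y$. $d(x,y)$ is the graph (shortest path) distance, $B(o,n)=\{x\in V: d(o,x)\le n\}$, and $W_o(n)=\sum_{x\in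 B(o,n),\,y\in V,\,d(o,x)<d(o,y)}\mu_{xy}$. A nontrivial positive solution of $\Delta_m u+u^p|\nabla u|^q\le 0$ is a non-constant function $u:V\to(0,\infty)$ such that $\Delta_m u(x)+u(x)^p|\nabla u(x)|^q\le 0$ for every $x\in V$, with the conventions $0^0=1$, $0^q=0$ for $q>0$, and, for $q<0$, $|\nabla u(x)|^q=+\infty$ when $|\nabla u(x)|=0$ (so the inequality fails at such $x$). *)

theory Defs
  imports Complex_Main
begin

text \<open>A weighted graph on the vertex type 'a is given by a weight function mu;
  x ~ y iff mu x y > 0.  The vertex set is UNIV.\<close>

definition adj :: "('a \<Rightarrow> 'a \<Rightarrow> real) \<Rightarrow> 'a \<Rightarrow> 'a \<Rightarrow> bool" where
  "adj mu x y \<longleftrightarrow> mu x y > 0"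

definition weighted_graph :: "('a \<Rightarrow> 'a \<Rightarrow> real) \<Rightarrow> bool" where
  "weighted_graph mu \<longleftrightarrow>
     infinite (UNIV :: 'a set) \<and>
     (\<forall>x y. mu x y \<ge> 0) \<and>
     (\<forall>x y. mu x y = mu y x) \<and>
     (\<forall>x. mu x x = 0) \<and>
     (\<forall>x. finite {y. adj mu x y}) \<and>
     (\<forall>x y. (adj mu)\<^sup>*\<^sup>* x y)"

definition vmeasure :: "('a \<Rightarrow> 'a \<Rightarrow> real) \<Rightarrow> 'a \<Rightarrow> real" where
  "vmeasure mu x = (\<Sum>y\<in>{y. adj mu x y}. mu x y)"

definition cond_p0 :: "('a \<Rightarrow> 'a \<Rightarrow> real) \<Rightarrow> real \<Rightarrow> bool" where
  "cond_p0 mu p0 \<longleftrightarrow> p0 > 1 \<and> (\<forall>x y. adj mu x y \<longrightarrow> mu x y / vmeasure mu x \<ge> 1 / p0)"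

definition gdist :: "('a \<Rightarrow> 'a \<Rightarrow> real) \<Rightarrow> 'a \<Rightarrow> 'a \<Rightarrow> nat" where
  "gdist mu x y = (LEAST n. (adj mu ^^ n) x y)"

definition ball :: "('a \<Rightarrow> 'a \<Rightarrow> real) \<Rightarrow> 'a \<Rightarrow> nat \<Rightarrow> 'a set" where
  "ball mu v0 n = {x. gdist mu v0 x \<le> n}"

text \<open>W_o(n): sum of mu_xy over x in B(o,n), y with d(o,x) < d(o,y)
  (only neighbours contribute, since mu_xy = 0 otherwise).\<close>
definition W :: "('a \<Rightarrow> 'a \<Rightarrow> real) \<Rightarrow> 'a \<Rightarrow> nat \<Rightarrow> real" where
  "W mu v0 n = (\<Sum>(x,y)\<in>{(x,y). x \<in> ball mu v0 n \<and> adj mu x y \<and> gdist mu v0 x < gdist mu v0 y}. mu x y)"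

definition mlap :: "('a \<Rightarrow> 'a \<Rightarrow> real) \<Rightarrow> real \<Rightarrow> ('a \<Rightarrow> real) \<Rightarrow> 'a \<Rightarrow> real" where
  "mlap mu m u x = (1 / vmeasure mu x) *
     (\<Sum>y\<in>{y. adj mu x y}. mu x y * \<bar>u y - u x\<bar> powr (m - 2) * (u y - u x))"

definition grad :: "('a \<Rightarrow> 'a \<Rightarrow> real) \<Rightarrow> ('a \<Rightarrow> real) \<Rightarrow> 'a \<Rightarrow> real" where
  "grad mu u x = sqrt (\<Sum>y\<in>{y. adj mu x y}. mu x y / (2 * vmeasure mu x) * (u y - u x)\<^sup>2)"

text \<open>Inequality Delta_m u + u^p |grad u|^q <= 0 at x, with conventions
  0^0 = 1, 0^q = 0 for q > 0, and failure when q < 0 and |grad u(x)| = 0.\<close>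
definition ineq_at :: "('a \<Rightarrow> 'a \<Rightarrow> real) \<Rightarrow> real \<Rightarrow> real \<Rightarrow> real \<Rightarrow> ('a \<Rightarrow> real) \<Rightarrow> 'a \<Rightarrow> bool" where
  "ineq_at mu m p q u x \<longleftrightarrow>
     (if grad mu u x = 0 then
        (if q < 0 then False
         else if q = 0 then mlap mu m u x + u x powr p \<le> 0
         else mlap mu m u x \<le> 0)
      else mlap mu m u x + u x powr p * grad mu u x powr q \<le> 0)"

definition nontrivial_pos_solution ::
  "('a \<Rightarrow> 'a \<Rightarrow> real) \<Rightarrow> real \<Rightarrow> real \<Rightarrow> real \<Rightarrow> ('a \<Rightarrow> real) \<Rightarrow> bool" where
  "nontrivial_pos_solution mu m p q u \<longleftrightarrow>
     (\<forall>x. u x > 0) \<and> (\<exists>x y. u x \<noteq> u y) \<and> (\<forall>x. ineq_at mu m p q u x)"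

end

theory Submission
  imports Defs
begin

(* Dividing the inequality by u^(m-1) and using p + q = m - 1 turns it into
   flux x + mu(x) (|grad u(x)| / u(x))^q <= 0, where flux x = sum_y mu_xy phi(u(y)/u(x) - 1)
   and phi(s) = |s|^(m-2) s.  Summed over a ball B, the edges inside B pair up into the
   nonnegative symmetric terms phi(b/a - 1) + phi(a/b - 1), while an edge leaving B loses at
   most its weight.  Hence the energy E(n) (pair terms inside B(o,n) plus gradient terms) is at
   most W_o(n).  Condition (p_0) gives a local estimate: what a vertex loses across the boundary
   is at most K times its own contribution to the energy, with K depending on p_0, m, q only.
   Thus E(n+1) <= 2K (E(n+2) - E(n)), so E grows at least like (1 + 1/(2K))^(n/2), which a
   nonconstant solution (E > 0 eventually) cannot do when W_o(n) <= C e^(kappa n) with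
   kappa < ln(1 + 1/(2K)) / 2. *)

definition signed_pow :: "real \<Rightarrow> real \<Rightarrow> real" where
  "signed_pow m s = \<bar>s\<bar> powr (m - 2) * s"

lemma signed_pow_nonneg: "s \<ge> 0 \<Longrightarrow> signed_pow m s = s powr (m - 1)"
  by (cases "s = 0") (auto simp: signed_pow_def powr_mult_base mult.commute)

lemma signed_pow_minus: "signed_pow m (- s) = - signed_pow m s"
  by (simp add: signed_pow_def)

lemma signed_pow_nonpos: "s \<le> 0 \<Longrightarrow> signed_pow m s = - ((- s) powr (m - 1))"
  using signed_pow_nonneg[of "- s" m] signed_pow_minus[of m s] by simp

lemma signed_pow_ge_neg_part: "- ((max 0 (- s)) powr (m - 1)) \<le> signed_pow m s"
  by (cases "s \<ge> 0") (auto simp: signed_pow_nonneg signed_pow_nonpos)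

definition pair_energy :: "real \<Rightarrow> real \<Rightarrow> real \<Rightarrow> real" where
  "pair_energy m a b = signed_pow m (b / a - 1) + signed_pow m (a / b - 1)"

lemma pair_energy_commute: "pair_energy m a b = pair_energy m b a"
  by (simp add: pair_energy_def)

lemma pair_energy_ordered:
  assumes "0 < a" "a \<le> b"
  shows "pair_energy m a b = (b / a - 1) powr (m - 1) - (1 - a / b) powr (m - 1)"
  using assms by (simp add: pair_energy_def signed_pow_nonneg signed_pow_nonpos)

lemma pair_energy_nonneg_of_le:
  assumes "m \<ge> 1" "0 < a" "a \<le> b"
  shows "pair_energy m a b \<ge> 0"
proof -
  have "1 - a / b = (b - a) / b" using assms by (simp add: field_simps)
  also have "\<dots> \<le> (b - a) / a" using assms by (intro divide_left_mono) auto
  also have "\<dots> = b / a - 1" using assms by (simp add: field_simps)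
  finally have "(1 - a / b) powr (m - 1) \<le> (b / a - 1) powr (m - 1)"
    using assms by (intro powr_mono2) (auto simp: field_simps)
  then show ?thesis
    using assms by (simp add: pair_energy_ordered)
qed

lemma pair_energy_nonneg: "m \<ge> 1 \<Longrightarrow> 0 < a \<Longrightarrow> 0 < b \<Longrightarrow> pair_energy m a b \<ge> 0"
  by (metis linear pair_energy_commute pair_energy_nonneg_of_le)

lemma pair_energy_ge_if_double:
  assumes "m > 1" "0 < a" "2 * a \<le> b"
  shows "1 - 2 powr (1 - m) \<le> pair_energy m a b"
proof -
  define X where "X = b / a - 1"
  have X: "X \<ge> 1" using assms by (simp add: X_def field_simps)
  have "1 - a / b = X * (a / b)" using assms by (simp add: X_def field_simps)
  also have "\<dots> \<le> X / 2" using assms X by (simp add: field_simps)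
  finally have "(1 - a / b) powr (m - 1) \<le> (X / 2) powr (m - 1)"
    using assms by (intro powr_mono2) (auto simp: field_simps)
  also have "\<dots> = X powr (m - 1) * 2 powr (1 - m)"
    using X by (simp add: powr_divide powr_diff)
  finally have "X powr (m - 1) * (1 - 2 powr (1 - m)) \<le> pair_energy m a b"
    using assms by (simp add: pair_energy_ordered X_def algebra_simps)
  moreover have "1 - 2 powr (1 - m) \<le> X powr (m - 1) * (1 - 2 powr (1 - m))"
    using assms X by (simp add: powr_less_one ge_one_powr_ge_zero)
  ultimately show ?thesis by linarith
qed

lemma gdist_path:
  assumes "weighted_graph mu"
  shows "(adj mu ^^ gdist mu v0 x) v0 x"
proof -
  have "\<exists>n. (adj mu ^^ n) v0 x"
    using assms rtranclp_power by (metis weighted_graph_def)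
  then show ?thesis unfolding gdist_def by (rule LeastI_ex)
qed

lemma gdist_le: "(adj mu ^^ n) v0 x \<Longrightarrow> gdist mu v0 x \<le> n"
  unfolding gdist_def by (rule Least_le)

lemma gdist_adj_le:
  assumes "weighted_graph mu" "adj mu x y"
  shows "gdist mu v0 y \<le> Suc (gdist mu v0 x)"
  by (rule gdist_le[OF relpowp_Suc_I[OF gdist_path[OF assms(1)] assms(2)]])

lemma ball_mono: "n \<le> k \<Longrightarrow> ball mu v0 n \<subseteq> ball mu v0 k"
  by (auto simp: ball_def)

lemma adj_in_ball_Suc:
  assumes "weighted_graph mu" "x \<in> ball mu v0 n" "adj mu x y"
  shows "y \<in> ball mu v0 (Suc n)"
  using gdist_adj_le[OF assms(1,3), of v0] assms(2) by (simp add: ball_def)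

lemma ball_Suc_subset:
  assumes "weighted_graph mu"
  shows "ball mu v0 (Suc n) \<subseteq> ball mu v0 n \<union> (\<Union>x\<in>ball mu v0 n. {y. adj mu x y})"
proof
  fix y assume y: "y \<in> ball mu v0 (Suc n)"
  show "y \<in> ball mu v0 n \<union> (\<Union>x\<in>ball mu v0 n. {y. adj mu x y})"
  proof (cases "gdist mu v0 y \<le> n")
    case False
    then have "gdist mu v0 y = Suc n" using y by (simp add: ball_def)
    then have "(adj mu ^^ Suc n) v0 y" using gdist_path[OF assms, of v0 y] by metis
    then obtain x where "(adj mu ^^ n) v0 x" "adj mu x y" by (rule relpowp_Suc_E)
    then have "x \<in> ball mu v0 n" by (simp add: ball_def gdist_le)
    with \<open>adj mu x y\<close> show ?thesis by blast
  qed (simp add: ball_def)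
qed

lemma finite_ball:
  assumes "weighted_graph mu"
  shows "finite (ball mu v0 n)"
proof (induction n)
  case 0
  have "x = v0" if "x \<in> ball mu v0 0" for x
    using that gdist_path[OF assms, of v0 x] by (simp add: ball_def)
  then have "ball mu v0 0 \<subseteq> {v0}" by blast
  then show ?case by (rule finite_subset) simp
next
  case (Suc n)
  have "finite (ball mu v0 n \<union> (\<Union>x\<in>ball mu v0 n. {y. adj mu x y}))"
    using Suc assms by (simp add: weighted_graph_def)
  then show ?case using ball_Suc_subset[OF assms] by (rule finite_subset[rotated])
qed

locale positive_function_on_graph =
  fixes mu :: "'a \<Rightarrow> 'a \<Rightarrow> real" and m :: real and u :: "'a \<Rightarrow> real"
  assumes weighted_graph: "weighted_graph mu" and m_gt_1: "m > 1" and u_pos: "\<And>x. u x > 0"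
begin

abbreviation nbrs :: "'a \<Rightarrow> 'a set" where
  "nbrs x \<equiv> {y. adj mu x y}"

definition flux :: "'a \<Rightarrow> real" where
  "flux x = (\<Sum>y\<in>nbrs x. mu x y * signed_pow m (u y / u x - 1))"

definition deficit :: "'a \<Rightarrow> 'a \<Rightarrow> real" where
  "deficit x y = (max 0 (1 - u y / u x)) powr (m - 1)"

definition edge_energy :: "'a set \<Rightarrow> real" where
  "edge_energy B = (\<Sum>x\<in>B. \<Sum>y\<in>B. mu x y * pair_energy m (u x) (u y))"

definition boundary :: "'a set \<Rightarrow> real" where
  "boundary B = (\<Sum>x\<in>B. \<Sum>y\<in>nbrs x - B. mu x y * deficit x y)"

lemma finite_nbrs: "finite (nbrs x)"
  using weighted_graph by (simp add: weighted_graph_def)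

lemma mu_nonneg: "mu x y \<ge> 0"
  using weighted_graph by (simp add: weighted_graph_def)

lemma mu_commute: "mu x y = mu y x"
  using weighted_graph by (simp add: weighted_graph_def)

lemma mu_pos: "y \<in> nbrs x \<Longrightarrow> mu x y > 0"
  by (simp add: adj_def)

lemma vmeasure_nonneg: "vmeasure mu x \<ge> 0"
  unfolding vmeasure_def by (rule sum_nonneg) (simp add: mu_nonneg)

lemma vmeasure_pos: "nbrs x \<noteq> {} \<Longrightarrow> vmeasure mu x > 0"
  unfolding vmeasure_def using finite_nbrs mu_pos by (intro sum_pos) auto

lemma pair_energy_of_u_nonneg: "pair_energy m (u x) (u y) \<ge> 0"
  using pair_energy_nonneg m_gt_1 u_pos by simp

lemma deficit_nonneg: "deficit x y \<ge> 0"
  by (simp add: deficit_def)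

lemma deficit_le_1: "deficit x y \<le> 1"
proof -
  have "u y / u x > 0" using u_pos[of x] u_pos[of y] by simp
  then show ?thesis unfolding deficit_def using m_gt_1 by (intro powr_le1) auto
qed

lemma signed_pow_ge_neg_deficit: "- deficit x y \<le> signed_pow m (u y / u x - 1)"
  using signed_pow_ge_neg_part[where s = "u y / u x - 1"] by (simp add: deficit_def)

lemma deficit_sum_le_vmeasure: "(\<Sum>y\<in>nbrs x. mu x y * deficit x y) \<le> vmeasure mu x"
  unfolding vmeasure_def using deficit_le_1 mu_nonneg by (intro sum_mono) (simp add: mult_left_le)

lemma flux_eq_mlap: "flux x = u x powr (1 - m) * (vmeasure mu x * mlap mu m u x)"
proof -
  have summand: "mu x y * (\<bar>u y - u x\<bar> powr (m - 2) * (u y - u x))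
      = u x powr (m - 1) * (mu x y * signed_pow m (u y / u x - 1))" for y
  proof -
    have "\<bar>u y - u x\<bar> = u x * \<bar>u y / u x - 1\<bar>" "u y - u x = u x * (u y / u x - 1)"
      using u_pos[of x] by (simp_all add: field_simps abs_mult)
    moreover have "u x powr (m - 2) * u x = u x powr (m - 1)"
      using u_pos[of x] by (simp add: powr_mult_base mult.commute)
    ultimately show ?thesis
      by (simp add: signed_pow_def powr_mult flip: \<open>u x powr (m - 2) * u x = u x powr (m - 1)\<close>)
  qed
  have "vmeasure mu x * mlap mu m u x
      = (\<Sum>y\<in>nbrs x. mu x y * (\<bar>u y - u x\<bar> powr (m - 2) * (u y - u x)))"
    using vmeasure_pos[of x] by (cases "nbrs x = {}") (auto simp: mlap_def mult.assoc)
  also have "\<dots> = u x powr (m - 1) * flux x"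
    by (simp add: summand flux_def sum_distrib_left)
  finally show ?thesis
    using u_pos[of x] by (simp add: powr_add[symmetric])
qed

lemma edge_energy_le_flux_boundary:
  assumes "finite B"
  shows "edge_energy B / 2 \<le> (\<Sum>x\<in>B. flux x) + boundary B"
proof -
  define f where "f x y = mu x y * signed_pow m (u y / u x - 1)" for x y
  have flux_split: "flux x = (\<Sum>y\<in>B. f x y) + (\<Sum>y\<in>nbrs x - B. f x y)" for x
  proof -
    have "flux x = (\<Sum>y\<in>nbrs x \<inter> B. f x y) + (\<Sum>y\<in>nbrs x - B. f x y)"
      unfolding flux_def f_def by (rule sum.Int_Diff[OF finite_nbrs])
    moreover have "(\<Sum>y\<in>nbrs x \<inter> B. f x y) = (\<Sum>y\<in>B. f x y)"
      using assms by (intro sum.mono_neutral_left) (auto simp: f_def adj_def less_le mu_nonneg)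
    ultimately show ?thesis by simp
  qed
  have pair: "f x y + f y x = mu x y * pair_energy m (u x) (u y)" for x y
    by (simp add: f_def pair_energy_def mu_commute[of y x] distrib_left)
  have "2 * (\<Sum>x\<in>B. \<Sum>y\<in>B. f x y) = (\<Sum>x\<in>B. \<Sum>y\<in>B. f x y + f y x)"
    using sum.swap[of f B B] by (simp add: sum.distrib)
  also have "\<dots> = edge_energy B"
    by (simp add: pair edge_energy_def)
  finally have "2 * (\<Sum>x\<in>B. \<Sum>y\<in>B. f x y) = edge_energy B" .
  moreover have "- (mu x y * deficit x y) \<le> f x y" for x y
    using mult_left_mono[OF signed_pow_ge_neg_deficit mu_nonneg, of x y] by (simp add: f_def)
  then have "- boundary B \<le> (\<Sum>x\<in>B. \<Sum>y\<in>nbrs x - B. f x y)"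
    unfolding boundary_def sum_negf[symmetric] by (intro sum_mono)
  ultimately show ?thesis
    by (simp add: flux_split sum.distrib)
qed

lemma boundary_ball_Suc_le:
  "boundary (ball mu v0 (Suc n))
     \<le> (\<Sum>x\<in>ball mu v0 (Suc n) - ball mu v0 n. \<Sum>y\<in>nbrs x. mu x y * deficit x y)"
proof -
  let ?B0 = "ball mu v0 n" and ?B1 = "ball mu v0 (Suc n)"
  have interior: "nbrs x - ?B1 = {}" if "x \<in> ?B0" for x
    using adj_in_ball_Suc[OF weighted_graph that] by blast
  have "boundary ?B1 = (\<Sum>x\<in>?B1 - ?B0. \<Sum>y\<in>nbrs x - ?B1. mu x y * deficit x y)"
    unfolding boundary_def using finite_ball[OF weighted_graph]
    by (intro sum.mono_neutral_right) (auto simp: interior)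
  also have "\<dots> \<le> (\<Sum>x\<in>?B1 - ?B0. \<Sum>y\<in>nbrs x. mu x y * deficit x y)"
    using finite_nbrs mu_nonneg deficit_nonneg by (intro sum_mono sum_mono2) auto
  finally show ?thesis .
qed

lemma boundary_ball_le_W: "boundary (ball mu v0 n) \<le> W mu v0 n"
proof -
  let ?B = "ball mu v0 n"
  let ?S = "{(x, y). x \<in> ?B \<and> adj mu x y \<and> gdist mu v0 x < gdist mu v0 y}"
  have fin: "finite ?B" by (rule finite_ball[OF weighted_graph])
  have "boundary ?B \<le> (\<Sum>x\<in>?B. \<Sum>y\<in>nbrs x - ?B. mu x y)"
    unfolding boundary_def using deficit_le_1 mu_nonneg by (intro sum_mono) (simp add: mult_left_le)
  also have "\<dots> = (\<Sum>(x, y)\<in>(SIGMA x:?B. nbrs x - ?B). mu x y)"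
    using fin finite_nbrs by (intro sum.Sigma) auto
  also have "\<dots> \<le> (\<Sum>(x, y)\<in>?S. mu x y)"
  proof (rule sum_mono2)
    have "?S \<subseteq> (SIGMA x:?B. nbrs x)" by auto
    then show "finite ?S" by (rule finite_subset) (simp add: fin finite_nbrs)
  qed (auto simp: ball_def mu_nonneg)
  also have "\<dots> = W mu v0 n" by (simp add: W_def)
  finally show ?thesis .
qed

lemma edge_energy_nonneg: "edge_energy B \<ge> 0"
  unfolding edge_energy_def by (intro sum_nonneg mult_nonneg_nonneg mu_nonneg pair_energy_of_u_nonneg)

lemma edge_energy_mono:
  assumes "finite C" "B \<subseteq> C"
  shows "edge_energy B \<le> edge_energy C"
proof -
  have "edge_energy B \<le> (\<Sum>x\<in>B. \<Sum>y\<in>C. mu x y * pair_energy m (u x) (u y))"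
    unfolding edge_energy_def using assms mu_nonneg pair_energy_of_u_nonneg
    by (intro sum_mono sum_mono2) auto
  also have "\<dots> \<le> edge_energy C"
    unfolding edge_energy_def using assms mu_nonneg pair_energy_of_u_nonneg
    by (intro sum_mono2 sum_nonneg mult_nonneg_nonneg) auto
  finally show ?thesis .
qed

lemma edge_energy_ball_ring:
  "edge_energy (ball mu v0 n)
     + (\<Sum>x\<in>ball mu v0 (Suc n) - ball mu v0 n. \<Sum>y\<in>nbrs x. mu x y * pair_energy m (u x) (u y))
   \<le> edge_energy (ball mu v0 (Suc (Suc n)))"
proof -
  let ?B0 = "ball mu v0 n" and ?B1 = "ball mu v0 (Suc n)" and ?B2 = "ball mu v0 (Suc (Suc n))"
  define F where "F x = (\<Sum>y\<in>?B2. mu x y * pair_energy m (u x) (u y))" for x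
  have fin: "finite ?B0" "finite ?B1" "finite ?B2" using finite_ball[OF weighted_graph] by auto
  have F_nonneg: "F x \<ge> 0" for x
    unfolding F_def by (intro sum_nonneg mult_nonneg_nonneg mu_nonneg pair_energy_of_u_nonneg)
  have "edge_energy ?B0 \<le> (\<Sum>x\<in>?B0. F x)"
    unfolding edge_energy_def F_def using fin mu_nonneg pair_energy_of_u_nonneg
    by (intro sum_mono sum_mono2) (auto simp: ball_def)
  moreover have "(\<Sum>x\<in>?B1 - ?B0. \<Sum>y\<in>nbrs x. mu x y * pair_energy m (u x) (u y))
      \<le> (\<Sum>x\<in>?B1 - ?B0. F x)"
  proof (intro sum_mono)
    fix x assume "x \<in> ?B1 - ?B0"
    then show "(\<Sum>y\<in>nbrs x. mu x y * pair_energy m (u x) (u y)) \<le> F x"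
      unfolding F_def using fin mu_nonneg pair_energy_of_u_nonneg adj_in_ball_Suc[OF weighted_graph]
      by (intro sum_mono2) auto
  qed
  moreover have "(\<Sum>x\<in>?B0. F x) + (\<Sum>x\<in>?B1 - ?B0. F x) \<le> (\<Sum>x\<in>?B2. F x)"
  proof -
    have "(\<Sum>x\<in>?B0. F x) + (\<Sum>x\<in>?B1 - ?B0. F x) = (\<Sum>x\<in>?B1. F x)"
      using sum.subset_diff[OF ball_mono fin(2), of n F] by (simp add: add.commute)
    also have "\<dots> \<le> (\<Sum>x\<in>?B2. F x)"
      using fin F_nonneg by (intro sum_mono2) (auto simp: ball_def)
    finally show ?thesis .
  qed
  ultimately show ?thesis
    unfolding edge_energy_def[of ?B2] F_def[symmetric] by linarith
qed

lemma grad_sq: "(grad mu u x)\<^sup>2 = (\<Sum>y\<in>nbrs x. mu x y / (2 * vmeasure mu x) * (u y - u x)\<^sup>2)"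
  unfolding grad_def by (intro real_sqrt_pow2 sum_nonneg) (simp add: mu_nonneg vmeasure_nonneg)

lemma grad_nonneg: "grad mu u x \<ge> 0"
  unfolding grad_def by (intro real_sqrt_ge_zero sum_nonneg) (simp add: mu_nonneg vmeasure_nonneg)

lemma edge_term_le_grad_sq:
  "y \<in> nbrs x \<Longrightarrow> mu x y / (2 * vmeasure mu x) * (u y - u x)\<^sup>2 \<le> (grad mu u x)\<^sup>2"
  unfolding grad_sq using finite_nbrs mu_nonneg vmeasure_nonneg
  by (intro member_le_sum[where f = "\<lambda>y. mu x y / (2 * vmeasure mu x) * (u y - u x)\<^sup>2"]) auto

lemma grad_le:
  assumes "c \<ge> 0" and diff: "\<And>y. y \<in> nbrs x \<Longrightarrow> \<bar>u y - u x\<bar> \<le> c"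
  shows "grad mu u x \<le> c"
proof -
  have "(grad mu u x)\<^sup>2 \<le> (\<Sum>y\<in>nbrs x. mu x y / (2 * vmeasure mu x) * c\<^sup>2)"
    unfolding grad_sq
  proof (intro sum_mono mult_left_mono)
    fix y assume "y \<in> nbrs x"
    then show "(u y - u x)\<^sup>2 \<le> c\<^sup>2"
      using diff power2_le_iff_abs_le[OF assms(1)] by blast
  qed (simp add: mu_nonneg vmeasure_nonneg)
  also have "\<dots> = vmeasure mu x / (2 * vmeasure mu x) * c\<^sup>2"
    unfolding vmeasure_def[of mu x] by (simp add: sum_distrib_right sum_divide_distrib)
  also have "\<dots> \<le> c\<^sup>2"
    by (cases "vmeasure mu x = 0") simp_all
  finally show ?thesis
    using assms(1) by (rule power2_le_imp_le)
qed

lemma grad_ne_0_if_nonconstant: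
  assumes "u a \<noteq> u b"
  obtains x where "grad mu u x \<noteq> 0"
proof -
  have "\<exists>x y. adj mu x y \<and> u x \<noteq> u y"
  proof (rule ccontr)
    assume "\<not> ?thesis"
    then have const: "u x = u y" if "adj mu x y" for x y
      using that by blast
    have "(adj mu)\<^sup>*\<^sup>* a b"
      using weighted_graph by (simp add: weighted_graph_def)
    then have "u a = u b"
    proof (induction rule: rtranclp_induct)
      case (step y z)
      then show ?case using const[of y z] by simp
    qed simp
    with assms show False by simp
  qed
  then obtain x y where xy: "y \<in> nbrs x" "u x \<noteq> u y" by blast
  moreover have "mu x y > 0" "vmeasure mu x > 0"
    using mu_pos[OF xy(1)] vmeasure_pos xy(1) by auto
  ultimately have "0 < mu x y / (2 * vmeasure mu x) * (u y - u x)\<^sup>2" by simp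
  with edge_term_le_grad_sq[OF xy(1)] have "grad mu u x \<noteq> 0" by auto
  then show ?thesis by (rule that)
qed

end

(* The summands are the constants of the two cases of deficit_sum_le: some neighbour at least
   doubles u, or none does. *)
definition growth_const :: "real \<Rightarrow> real \<Rightarrow> real \<Rightarrow> real" where
  "growth_const p0 m q = p0 / (1 - 2 powr (1 - m)) + sqrt (2 * p0) powr q"

lemma one_le_growth_const:
  assumes "p0 \<ge> 1" "m > 1"
  shows "1 \<le> growth_const p0 m q"
proof -
  have "0 < 1 - 2 powr (1 - m)" "1 - 2 powr (1 - m) \<le> 1"
    using assms(2) by (simp_all add: powr_less_one)
  then have "p0 \<le> p0 / (1 - 2 powr (1 - m))"
    using assms(1) by (simp add: le_divide_eq)
  with assms(1) show ?thesis
    by (simp add: growth_const_def add_increasing2)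
qed

locale positive_solution = positive_function_on_graph +
  fixes p q p0 :: real
  assumes cond_p0: "cond_p0 mu p0"
    and exponents: "p + q = m - 1" and p_nonneg: "p \<ge> 0" and q_ne_0: "q \<noteq> 0"
    and solves: "\<And>x. ineq_at mu m p q u x"
begin

(* u^p |grad u|^q / u^(m-1); set to 0 where grad u vanishes, which ineq_at only allows for q > 0. *)
definition source :: "'a \<Rightarrow> real" where
  "source x = (if grad mu u x = 0 then 0 else (grad mu u x / u x) powr q)"

definition energy :: "'a set \<Rightarrow> real" where
  "energy B = edge_energy B / 2 + (\<Sum>x\<in>B. vmeasure mu x * source x)"

abbreviation K :: real where
  "K \<equiv> growth_const p0 m q"

lemma p0_gt_1: "p0 > 1"
  using cond_p0 by (simp add: cond_p0_def)

lemma K_ge_1: "K \<ge> 1"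
  using one_le_growth_const p0_gt_1 m_gt_1 by simp

lemma K_ge_summands: "p0 / (1 - 2 powr (1 - m)) \<le> K" "sqrt (2 * p0) powr q \<le> K"
proof -
  have "0 < 1 - 2 powr (1 - m)" using m_gt_1 by (simp add: powr_less_one)
  then show "p0 / (1 - 2 powr (1 - m)) \<le> K" "sqrt (2 * p0) powr q \<le> K"
    using p0_gt_1 by (simp_all add: growth_const_def)
qed

lemma mu_ratio_ge: "y \<in> nbrs x \<Longrightarrow> 1 / p0 \<le> mu x y / vmeasure mu x"
  using cond_p0 by (simp add: cond_p0_def)

lemma vmeasure_le_p0_mu:
  assumes "y \<in> nbrs x"
  shows "vmeasure mu x \<le> p0 * mu x y"
proof -
  have "vmeasure mu x > 0" using vmeasure_pos assms by auto
  then show ?thesis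
    using mu_ratio_ge[OF assms] p0_gt_1 by (simp add: field_simps)
qed

lemma diff_le_grad:
  assumes "y \<in> nbrs x"
  shows "\<bar>u y - u x\<bar> \<le> sqrt (2 * p0) * grad mu u x"
proof -
  have "(u y - u x)\<^sup>2 / (2 * p0) = 1 / p0 * ((u y - u x)\<^sup>2 / 2)" by simp
  also have "\<dots> \<le> mu x y / vmeasure mu x * ((u y - u x)\<^sup>2 / 2)"
    using mu_ratio_ge[OF assms] by (rule mult_right_mono) simp
  also have "\<dots> \<le> (grad mu u x)\<^sup>2"
    using edge_term_le_grad_sq[OF assms] by simp
  finally have "(u y - u x)\<^sup>2 \<le> (sqrt (2 * p0) * grad mu u x)\<^sup>2"
    using p0_gt_1 by (simp add: power_mult_distrib field_simps)
  then show ?thesis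
    using p0_gt_1 grad_nonneg by (simp add: power2_le_iff_abs_le)
qed

lemma source_nonneg: "source x \<ge> 0"
  by (simp add: source_def)

lemma flux_add_source_nonpos: "flux x + vmeasure mu x * source x \<le> 0"
proof (cases "grad mu u x = 0")
  case True
  then have "mlap mu m u x \<le> 0"
    using solves[of x] q_ne_0 by (auto simp: ineq_at_def split: if_splits)
  then show ?thesis
    using True u_pos[of x] vmeasure_nonneg[of x]
    by (simp add: flux_eq_mlap source_def mult_nonneg_nonpos)
next
  case False
  have "u x powr (1 - m) * (u x powr p * grad mu u x powr q) = source x"
  proof -
    have "1 - m + p = - q" using exponents by simp
    then have "u x powr (1 - m) * u x powr p = inverse (u x powr q)"
      by (simp add: powr_add[symmetric] powr_minus)
    then have "u x powr (1 - m) * (u x powr p * grad mu u x powr q) = grad mu u x powr q / u x powr q"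
      by (simp add: mult.assoc[symmetric] divide_inverse mult.commute)
    also have "\<dots> = source x"
      using False grad_nonneg[of x] u_pos[of x] by (simp add: source_def powr_divide)
    finally show ?thesis .
  qed
  moreover have "mlap mu m u x + u x powr p * grad mu u x powr q \<le> 0"
    using solves[of x] False by (simp add: ineq_at_def)
  then have "vmeasure mu x * (u x powr (1 - m) * (mlap mu m u x + u x powr p * grad mu u x powr q)) \<le> 0"
    using vmeasure_nonneg[of x] u_pos[of x] by (simp add: mult_nonneg_nonpos)
  ultimately show ?thesis
    by (simp add: flux_eq_mlap algebra_simps)
qed

lemma energy_le_boundary:
  assumes "finite B"
  shows "energy B \<le> boundary B"
proof -
  have "(\<Sum>x\<in>B. flux x + vmeasure mu x * source x) \<le> 0"
    by (intro sum_nonpos flux_add_source_nonpos)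
  with edge_energy_le_flux_boundary[OF assms] show ?thesis
    by (simp add: energy_def sum.distrib)
qed

lemma energy_mono:
  assumes "finite C" "B \<subseteq> C"
  shows "energy B \<le> energy C"
  using edge_energy_mono[OF assms] sum_mono2[OF assms, of "\<lambda>x. vmeasure mu x * source x"]
    vmeasure_nonneg source_nonneg
  by (simp add: energy_def)

lemma deficit_sum_le_if_far:
  assumes "z \<in> nbrs x" "2 * u x \<le> u z"
  shows "(\<Sum>y\<in>nbrs x. mu x y * deficit x y) \<le> K * (\<Sum>y\<in>nbrs x. mu x y * pair_energy m (u x) (u y))"
proof -
  define c0 where "c0 = 1 - 2 powr (1 - m)"
  have c0: "c0 > 0" using m_gt_1 by (simp add: c0_def powr_less_one)
  have "1 \<le> pair_energy m (u x) (u z) / c0"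
    using pair_energy_ge_if_double[OF m_gt_1 u_pos assms(2)] c0 by (simp add: c0_def)
  then have "mu x z \<le> mu x z * pair_energy m (u x) (u z) / c0"
    using mult_left_mono[OF _ mu_nonneg[of x z]] by fastforce
  also have "\<dots> \<le> (\<Sum>y\<in>nbrs x. mu x y * pair_energy m (u x) (u y)) / c0"
    using assms(1) finite_nbrs mu_nonneg pair_energy_of_u_nonneg c0
    by (intro divide_right_mono member_le_sum[where f = "\<lambda>y. mu x y * pair_energy m (u x) (u y)"]) auto
  finally have "p0 * mu x z \<le> p0 / c0 * (\<Sum>y\<in>nbrs x. mu x y * pair_energy m (u x) (u y))"
    using mult_left_mono[of _ _ p0] p0_gt_1 by fastforce
  then have "vmeasure mu x \<le> p0 / c0 * (\<Sum>y\<in>nbrs x. mu x y * pair_energy m (u x) (u y))"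
    using vmeasure_le_p0_mu[OF assms(1)] by linarith
  also have "\<dots> \<le> K * (\<Sum>y\<in>nbrs x. mu x y * pair_energy m (u x) (u y))"
    unfolding c0_def using K_ge_summands(1) mu_nonneg pair_energy_of_u_nonneg
    by (intro mult_right_mono sum_nonneg) auto
  finally show ?thesis
    using deficit_sum_le_vmeasure[of x] by linarith
qed

lemma source_ge_1_if_near:
  assumes "q < 0" and near: "\<And>y. y \<in> nbrs x \<Longrightarrow> u y < 2 * u x"
  shows "1 \<le> source x"
proof -
  have "grad mu u x \<noteq> 0"
    using solves[of x] assms(1) by (auto simp: ineq_at_def)
  then have "0 < grad mu u x / u x" using grad_nonneg[of x] u_pos[of x] by simp
  moreover have "grad mu u x \<le> u x"
  proof (rule grad_le)
    fix y assume "y \<in> nbrs x"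
    then show "\<bar>u y - u x\<bar> \<le> u x" using near[of y] u_pos[of y] by auto
  qed (simp add: less_imp_le u_pos)
  then have "grad mu u x / u x \<le> 1" using u_pos[of x] by simp
  ultimately have "1 powr q \<le> (grad mu u x / u x) powr q"
    using assms(1) by (intro powr_mono2') auto
  with \<open>grad mu u x \<noteq> 0\<close> show ?thesis by (simp add: source_def)
qed

lemma deficit_le_source:
  assumes "q > 0" "y \<in> nbrs x"
  shows "deficit x y \<le> sqrt (2 * p0) powr q * source x"
proof (cases "u x \<le> u y")
  case True
  then have "deficit x y = 0" using u_pos[of x] by (simp add: deficit_def)
  then show ?thesis using source_nonneg by simp
next
  case False
  define t where "t = 1 - u y / u x"
  have t: "0 < t" "t \<le> 1" using False u_pos[of x] u_pos[of y] by (simp_all add: t_def)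
  have "t = \<bar>u y - u x\<bar> / u x" using False u_pos[of x] by (simp add: t_def field_simps)
  also have "\<dots> \<le> sqrt (2 * p0) * (grad mu u x / u x)"
    using diff_le_grad[OF assms(2)] u_pos[of x] by (simp add: divide_right_mono)
  finally have t_le: "t \<le> sqrt (2 * p0) * (grad mu u x / u x)" .
  then have "grad mu u x \<noteq> 0" using t by auto
  have "deficit x y = t powr (m - 1)" using t by (simp add: deficit_def t_def)
  also have "\<dots> \<le> t powr q" using t exponents p_nonneg by (intro powr_mono') auto
  also have "\<dots> \<le> (sqrt (2 * p0) * (grad mu u x / u x)) powr q"
    using t t_le assms(1) by (intro powr_mono2) auto
  also have "\<dots> = sqrt (2 * p0) powr q * source x"
    using \<open>grad mu u x \<noteq> 0\<close> grad_nonneg[of x] u_pos[of x]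
    by (subst powr_mult) (simp_all add: source_def)
  finally show ?thesis .
qed

lemma deficit_sum_le_if_near:
  assumes near: "\<And>y. y \<in> nbrs x \<Longrightarrow> u y < 2 * u x"
  shows "(\<Sum>y\<in>nbrs x. mu x y * deficit x y) \<le> K * (vmeasure mu x * source x)"
proof (cases "q < 0")
  case True
  have "vmeasure mu x \<le> vmeasure mu x * source x"
    using source_ge_1_if_near[OF True near] vmeasure_nonneg[of x] by (simp add: mult_le_cancel_left1)
  also have "\<dots> \<le> K * (vmeasure mu x * source x)"
    using mult_right_mono[OF K_ge_1, of "vmeasure mu x * source x"] vmeasure_nonneg[of x]
      source_nonneg[of x] by simp
  finally show ?thesis using deficit_sum_le_vmeasure[of x] by linarith
next
  case False
  then have "q > 0" using q_ne_0 by simp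
  have "(\<Sum>y\<in>nbrs x. mu x y * deficit x y)
      \<le> (\<Sum>y\<in>nbrs x. mu x y * (sqrt (2 * p0) powr q * source x))"
    using deficit_le_source[OF \<open>q > 0\<close>] mu_nonneg by (intro sum_mono mult_left_mono) auto
  also have "\<dots> = sqrt (2 * p0) powr q * (vmeasure mu x * source x)"
    by (simp add: vmeasure_def sum_distrib_left sum_distrib_right mult.left_commute)
  also have "\<dots> \<le> K * (vmeasure mu x * source x)"
    using K_ge_summands(2) vmeasure_nonneg[of x] source_nonneg[of x] by (intro mult_right_mono) auto
  finally show ?thesis .
qed

lemma deficit_sum_le:
  "(\<Sum>y\<in>nbrs x. mu x y * deficit x y)
     \<le> K * (vmeasure mu x * source x + (\<Sum>y\<in>nbrs x. mu x y * pair_energy m (u x) (u y)))"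
proof -
  have "0 \<le> (\<Sum>y\<in>nbrs x. mu x y * pair_energy m (u x) (u y))"
    by (intro sum_nonneg mult_nonneg_nonneg mu_nonneg pair_energy_of_u_nonneg)
  then have "0 \<le> K * (vmeasure mu x * source x)" "0 \<le> K * (\<Sum>y\<in>nbrs x. mu x y * pair_energy m (u x) (u y))"
    using K_ge_1 vmeasure_nonneg[of x] source_nonneg[of x] by simp_all
  then show ?thesis
    using deficit_sum_le_if_far[of _ x] deficit_sum_le_if_near[of x]
    by (cases "\<exists>z\<in>nbrs x. 2 * u x \<le> u z") (force simp: distrib_left not_le)+
qed

lemma energy_ball_recursion:
  "energy (ball mu v0 (Suc n)) \<le> 2 * K * (energy (ball mu v0 (Suc (Suc n))) - energy (ball mu v0 n))"
proof -
  let ?B0 = "ball mu v0 n" and ?B1 = "ball mu v0 (Suc n)" and ?B2 = "ball mu v0 (Suc (Suc n))"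
  let ?S = "\<lambda>x. vmeasure mu x * source x" and ?E = "\<lambda>x. \<Sum>y\<in>nbrs x. mu x y * pair_energy m (u x) (u y)"
  have fin: "finite ?B0" "finite ?B1" "finite ?B2" using finite_ball[OF weighted_graph] by auto
  have "(\<Sum>x\<in>?B0. ?S x) + (\<Sum>x\<in>?B1 - ?B0. ?S x) = (\<Sum>x\<in>?B1. ?S x)"
    using sum.subset_diff[OF ball_mono fin(2), of n ?S] by (simp add: add.commute)
  also have "\<dots> \<le> (\<Sum>x\<in>?B2. ?S x)"
    using fin vmeasure_nonneg source_nonneg by (intro sum_mono2) (auto simp: ball_def)
  finally have "(\<Sum>x\<in>?B1 - ?B0. ?S x + ?E x) \<le> 2 * (energy ?B2 - energy ?B0)"
    using edge_energy_ball_ring[of v0 n] vmeasure_nonneg source_nonneg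
      sum_nonneg[of "?B1 - ?B0" ?S]
    by (simp add: energy_def sum.distrib)
  have "energy ?B1 \<le> (\<Sum>x\<in>?B1 - ?B0. \<Sum>y\<in>nbrs x. mu x y * deficit x y)"
    using energy_le_boundary[OF fin(2)] boundary_ball_Suc_le[of v0 n] by linarith
  also have "\<dots> \<le> (\<Sum>x\<in>?B1 - ?B0. K * (?S x + ?E x))"
    by (intro sum_mono deficit_sum_le)
  also have "\<dots> \<le> 2 * K * (energy ?B2 - energy ?B0)"
    using mult_left_mono[OF \<open>(\<Sum>x\<in>?B1 - ?B0. ?S x + ?E x) \<le> _\<close>, of K] K_ge_1
    by (simp add: sum_distrib_left[symmetric])
  finally show ?thesis .
qed

lemma energy_ball_two_step_growth:
  "(1 + 1 / (2 * K)) * energy (ball mu v0 n) \<le> energy (ball mu v0 (Suc (Suc n)))"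
proof -
  have "energy (ball mu v0 n) \<le> energy (ball mu v0 (Suc n))"
    by (intro energy_mono finite_ball[OF weighted_graph] ball_mono) simp
  with energy_ball_recursion[of v0 n] K_ge_1 show ?thesis
    by (simp add: field_simps)
qed

lemma energy_ball_le_W: "energy (ball mu v0 n) \<le> W mu v0 n"
  using energy_le_boundary[OF finite_ball[OF weighted_graph]] boundary_ball_le_W by (rule order_trans)

lemma energy_ball_pos:
  assumes "u a \<noteq> u b"
  obtains N where "energy (ball mu v0 N) > 0"
proof -
  obtain x where x: "grad mu u x \<noteq> 0" using grad_ne_0_if_nonconstant[OF assms] .
  have "nbrs x \<noteq> {}"
  proof
    assume "nbrs x = {}"
    with grad_sq[of x] x show False by simp
  qed
  then have "0 < vmeasure mu x * source x"
    using x grad_nonneg[of x] u_pos[of x] vmeasure_pos by (simp add: source_def)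
  also have "\<dots> \<le> (\<Sum>y\<in>ball mu v0 (gdist mu v0 x). vmeasure mu y * source y)"
    using finite_ball[OF weighted_graph] vmeasure_nonneg source_nonneg
    by (intro member_le_sum) (auto simp: ball_def)
  also have "\<dots> \<le> energy (ball mu v0 (gdist mu v0 x))"
    using edge_energy_nonneg by (simp add: energy_def)
  finally show ?thesis by (rule that)
qed

end

lemma two_step_growth_rate_le:
  fixes A :: "nat \<Rightarrow> real"
  assumes growth: "\<And>n. \<rho> * A n \<le> A (Suc (Suc n))" and "\<rho> > 0" "A N > 0"
    and bound: "\<And>n. n \<ge> n1 \<Longrightarrow> A n \<le> C * exp (\<kappa> * real n)"
  shows "ln \<rho> \<le> 2 * \<kappa>"
proof (rule ccontr)
  assume "\<not> ?thesis"
  then have "exp (2 * \<kappa>) < exp (ln \<rho>)" by simp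
  then have "exp (2 * \<kappa>) < \<rho>" using \<open>\<rho> > 0\<close> by simp
  then have r: "1 < \<rho> / exp (2 * \<kappa>)" by simp
  have iter: "\<rho> ^ j * A k \<le> A (k + 2 * j)" for j k
  proof (induction j)
    case (Suc j)
    have "\<rho> ^ Suc j * A k \<le> \<rho> * A (k + 2 * j)"
      using Suc \<open>\<rho> > 0\<close> by (simp add: mult.assoc)
    also have "\<dots> \<le> A (k + 2 * Suc j)" using growth[of "k + 2 * j"] by simp
    finally show ?case .
  qed simp
  define M where "M = N + 2 * n1"
  have "0 < \<rho> ^ n1 * A N" using assms by simp
  then have AM: "A M > 0" using iter[of n1 N] by (simp add: M_def)
  obtain j where j: "C * exp (\<kappa> * real M) / A M < (\<rho> / exp (2 * \<kappa>)) ^ j"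
    using real_arch_pow[OF r] by blast
  have "\<rho> ^ j * A M \<le> C * exp (\<kappa> * real (M + 2 * j))"
    using iter[of j M] bound[of "M + 2 * j"] by (simp add: M_def)
  also have "\<dots> = C * exp (\<kappa> * real M) * exp (2 * \<kappa>) ^ j"
    by (simp add: exp_add[symmetric] exp_of_nat_mult[symmetric] algebra_simps)
  finally have "(\<rho> / exp (2 * \<kappa>)) ^ j \<le> C * exp (\<kappa> * real M) / A M"
    using AM by (simp add: power_divide field_simps)
  with j show False by simp
qed

theorem theorem1p1:
  fixes p0 m p q :: real
  assumes "p0 > 1" and "m > 1"
    and "(p + q = m - 1 \<and> p \<ge> 0 \<and> q > 0) \<or> (p + q = m - 1 \<and> q < 0 \<and> m < 3)"
  shows "\<exists>k0>0. \<forall>(mu :: 'a \<Rightarrow> 'a \<Rightarrow> real) (v0 :: 'a) (\<kappa> :: real) (C :: real) (n1 :: nat).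
           weighted_graph mu \<and> cond_p0 mu p0 \<and> 0 < \<kappa> \<and> \<kappa> < k0 \<and> C > 0 \<and>
           (\<forall>n\<ge>n1. W mu v0 n \<le> C * exp (\<kappa> * real n))
           \<longrightarrow> \<not> (\<exists>u. nontrivial_pos_solution mu m p q u)"
proof -
  define k0 where "k0 = ln (1 + 1 / (2 * growth_const p0 m q)) / 2"
  have "growth_const p0 m q \<ge> 1" using assms(1,2) by (simp add: one_le_growth_const)
  then have "k0 > 0" unfolding k0_def by (intro divide_pos_pos ln_gt_zero) auto
  moreover have k0_le: "k0 \<le> \<kappa>"
    if "weighted_graph mu" "cond_p0 mu p0" and W_bound: "\<forall>n\<ge>n1. W mu v0 n \<le> C * exp (\<kappa> * real n)"
      and solution: "nontrivial_pos_solution mu m p q u"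
    for mu :: "'a \<Rightarrow> 'a \<Rightarrow> real" and v0 \<kappa> C n1 u
  proof -
    interpret positive_solution mu m u p q p0
      using that assms by unfold_locales (auto simp: nontrivial_pos_solution_def)
    obtain a b where "u a \<noteq> u b" using solution by (auto simp: nontrivial_pos_solution_def)
    then obtain N where "energy (ball mu v0 N) > 0" by (rule energy_ball_pos)
    have "ln (1 + 1 / (2 * K)) \<le> 2 * \<kappa>"
    proof (rule two_step_growth_rate_le[where A = "\<lambda>n. energy (ball mu v0 n)"])
      show "0 < 1 + 1 / (2 * K)" using K_ge_1 by (simp add: add_pos_nonneg)
      show "energy (ball mu v0 n) \<le> C * exp (\<kappa> * real n)" if "n1 \<le> n" for n
        using energy_ball_le_W[of v0 n] W_bound that by fastforce
    qed (fact energy_ball_two_step_growth \<open>energy (ball mu v0 N) > 0\<close>)+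
    then show ?thesis by (simp add: k0_def)
  qed
  ultimately show ?thesis
    using k0_le by (metis not_le)
qed

end
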